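(* Let $G$ act simplicially on a connected simplicial complex $X$, and let $Z\subseteq X$ be a connected essential $G$-c.s. If the homomorphism $\pi_1Z\to\pi_1X$ induced by inclusion is not injective, then $Z$ is contained in a thick $G$-c.s.
   Context: A $G$-c.s.\ is a $G$-invariant subcomplex $Z\subseteq X$ with $Z/G$ compact (not required to be connected). For a subcomplex $Y$ of dimension at most $2$, the degree of an edge is the number of triangles of $Y$ containing it. $Y$ is essential if every edge has degree at least $2$ in $Y$ and no connected component of $Y$ is a single vertex; an essential $Y$ is thick if some edge has degree at least $3$ in $Y$. *)

theory Defs
  imports "HOL-Algebra.Group_Action" "HOL-Library.Extended_Nat"
begin

definition simplicial_complex :: "'v set set \<Rightarrow> bool" where
  "simplicial_complex K \<longleftrightarrow>
     (\<forall>\<sigma>\<in>K. finite \<sigma> \<and> \<sigma> \<noteq> {}) \<and>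
     (\<forall>\<sigma>\<in>K. \<forall>\<tau>. \<tau> \<subseteq> \<sigma> \<and> \<tau> \<noteq> {} \<longrightarrow> \<tau> \<in> K)"

definition vertices :: "'v set set \<Rightarrow> 'v set" where
  "vertices K = \<Union>K"

definition subcomplex :: "'v set set \<Rightarrow> 'v set set \<Rightarrow> bool" where
  "subcomplex Y X \<longleftrightarrow> Y \<subseteq> X \<and> simplicial_complex Y"

definition sc_connected :: "'v set set \<Rightarrow> bool" where
  "sc_connected K \<longleftrightarrow> K \<noteq> {} \<and>
     (\<forall>u\<in>vertices K. \<forall>w\<in>vertices K. (u, w) \<in> {(a, b). {a, b} \<in> K}\<^sup>*)"

definition simplicial_action :: "('g, 'm) monoid_scheme \<Rightarrow> ('g \<Rightarrow> 'v \<Rightarrow> 'v) \<Rightarrow> 'v set set \<Rightarrow> bool" where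
  "simplicial_action G \<phi> X \<longleftrightarrow> group_action G (vertices X) \<phi> \<and>
     (\<forall>g\<in>carrier G. \<forall>\<sigma>\<in>X. \<phi> g ` \<sigma> \<in> X)"

(* G-c.s.: G-invariant subcomplex with compact quotient, i.e. finitely many
   G-orbits of simplices *)
definition G_cs :: "('g, 'm) monoid_scheme \<Rightarrow> ('g \<Rightarrow> 'v \<Rightarrow> 'v) \<Rightarrow> 'v set set \<Rightarrow> 'v set set \<Rightarrow> bool" where
  "G_cs G \<phi> X Z \<longleftrightarrow> subcomplex Z X \<and>
     (\<forall>g\<in>carrier G. \<forall>\<sigma>\<in>Z. \<phi> g ` \<sigma> \<in> Z) \<and>
     finite {{\<phi> g ` \<sigma> | g. g \<in> carrier G} | \<sigma>. \<sigma> \<in> Z}"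

definition edges :: "'v set set \<Rightarrow> 'v set set" where
  "edges Y = {e \<in> Y. card e = 2}"

definition triangles_at :: "'v set set \<Rightarrow> 'v set \<Rightarrow> 'v set set" where
  "triangles_at Y e = {t \<in> Y. card t = 3 \<and> e \<subseteq> t}"

definition degree :: "'v set set \<Rightarrow> 'v set \<Rightarrow> enat" where
  "degree Y e = (if finite (triangles_at Y e) then enat (card (triangles_at Y e)) else \<infinity>)"

definition dim_le2 :: "'v set set \<Rightarrow> bool" where
  "dim_le2 Y \<longleftrightarrow> (\<forall>\<sigma>\<in>Y. card \<sigma> \<le> 3)"

(* essential: every edge of degree \<ge> 2, no component is a single vertex
   (i.e. every vertex lies on an edge) *)
definition essential :: "'v set set \<Rightarrow> bool" where
  "essential Y \<longleftrightarrow> dim_le2 Y \<and>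
     (\<forall>e\<in>edges Y. degree Y e \<ge> 2) \<and>
     (\<forall>v\<in>vertices Y. \<exists>e\<in>edges Y. v \<in> e)"

definition thick :: "'v set set \<Rightarrow> bool" where
  "thick Y \<longleftrightarrow> essential Y \<and> (\<exists>e\<in>edges Y. degree Y e \<ge> 3)"

(* Edge-path groupoid (combinatorial model of the fundamental groupoid) *)
definition edge_path :: "'v set set \<Rightarrow> 'v list \<Rightarrow> bool" where
  "edge_path K p \<longleftrightarrow> p \<noteq> [] \<and> (\<forall>i. Suc i < length p \<longrightarrow> {p ! i, p ! Suc i} \<in> K)"

definition elem_move :: "'v set set \<Rightarrow> ('v list \<times> 'v list) set" where
  "elem_move K =
     {(xs @ [u, v, w] @ ys, xs @ [u, w] @ ys) | xs u v w ys. {u, v, w} \<in> K} \<union>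
     {(xs @ [u, u] @ ys, xs @ [u] @ ys) | xs u ys. {u} \<in> K}"

definition edge_equiv :: "'v set set \<Rightarrow> 'v list \<Rightarrow> 'v list \<Rightarrow> bool" where
  "edge_equiv K p q \<longleftrightarrow> (p, q) \<in> (elem_move K \<union> (elem_move K)\<inverse>)\<^sup>*"

definition pi1_injective :: "'v set set \<Rightarrow> 'v set set \<Rightarrow> bool" where
  "pi1_injective Z X \<longleftrightarrow>
     (\<forall>p. edge_path Z p \<and> hd p = last p \<and> edge_equiv X p [hd p] \<longrightarrow> edge_equiv Z p [hd p])"

end

theory Submission
  imports Defs
begin

text \<open>A loop in \<open>Z\<close> that is null-homotopic in \<open>X\<close> is filled by finitely many
  triangles of \<open>X\<close> outside \<open>Z\<close>; choose a filling meeting the fewest \<open>G\<close>-orbits of triangles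
  and let \<open>S\<close> be the \<open>G\<close>-saturation of its triangles. By minimality no triangle of \<open>S\<close> has a
  free edge outside \<open>Z\<close>, since otherwise its whole orbit could be collapsed away; hence
  \<open>W = Z \<union> S\<close> is an essential \<open>G\<close>-c.s. If no triangle of \<open>S\<close> contained an edge of \<open>Z\<close>, the
  null-homotopy could be pushed into \<open>Z\<close> by sending every edge outside \<open>Z\<close> on a round trip
  through a base point, contradicting non-injectivity. So some edge of \<open>Z\<close>, of degree at least
  2 in \<open>Z\<close>, lies in a triangle of \<open>S\<close> and has degree at least 3 in \<open>W\<close>.\<close>

section \<open>Edge-path equivalence\<close>

lemma edge_equiv_refl [simp]: "edge_equiv K p p"
  by (simp add: edge_equiv_def)

lemma edge_equiv_sym: "edge_equiv K p q \<Longrightarrow> edge_equiv K q p"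
  unfolding edge_equiv_def
  by (metis converse_Un converse_converse rtrancl_converseI sup_commute)

lemma edge_equiv_trans [trans]: "edge_equiv K p q \<Longrightarrow> edge_equiv K q r \<Longrightarrow> edge_equiv K p r"
  unfolding edge_equiv_def by (rule rtrancl_trans)

lemma elem_move_mono: "K \<subseteq> K' \<Longrightarrow> elem_move K \<subseteq> elem_move K'"
  unfolding elem_move_def by blast

lemma edge_equiv_mono: "K \<subseteq> K' \<Longrightarrow> edge_equiv K p q \<Longrightarrow> edge_equiv K' p q"
  unfolding edge_equiv_def
  by (metis converse_mono elem_move_mono rtrancl_mono sup.mono subsetD)

lemma elem_move_append: "(p, q) \<in> elem_move K \<Longrightarrow> (xs @ p @ ys, xs @ q @ ys) \<in> elem_move K"
  unfolding elem_move_def by (elim UnE CollectE exE conjE; simp) (metis append.assoc append_Cons)+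

lemma edge_equiv_append:
  "edge_equiv K p q \<Longrightarrow> edge_equiv K (xs @ p @ ys) (xs @ q @ ys)"
  unfolding edge_equiv_def
proof (induction rule: rtrancl_induct)
  case (step q r)
  then have "(xs @ q @ ys, xs @ r @ ys) \<in> elem_move K \<union> (elem_move K)\<inverse>"
    using elem_move_append by blast
  with step.IH show ?case by (rule rtrancl_into_rtrancl)
qed simp

lemma edge_equiv_append_left: "edge_equiv K p q \<Longrightarrow> edge_equiv K (xs @ p) (xs @ q)"
  using edge_equiv_append[of K p q xs "[]"] by simp

lemma edge_equiv_append_right: "edge_equiv K p q \<Longrightarrow> edge_equiv K (p @ ys) (q @ ys)"
  using edge_equiv_append[of K p q "[]" ys] by simp

lemma edge_equiv_stutter: "{x} \<in> K \<Longrightarrow> edge_equiv K [x, x] [x]"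
  unfolding edge_equiv_def elem_move_def
  by (rule r_into_rtrancl) (simp, metis append_Nil)

lemma edge_equiv_triangle: "{u, v, w} \<in> K \<Longrightarrow> edge_equiv K [u, v, w] [u, w]"
  unfolding edge_equiv_def elem_move_def
  by (rule r_into_rtrancl) (simp, metis append_Nil)

lemma edge_equiv_backtrack: "{x, y} \<in> K \<Longrightarrow> {x} \<in> K \<Longrightarrow> edge_equiv K [x, y, x] [x]"
  using edge_equiv_triangle[of x y x K] edge_equiv_stutter[of x K]
  by (simp add: insert_commute edge_equiv_trans)

lemma simplicial_complex_face:
  "simplicial_complex K \<Longrightarrow> \<sigma> \<in> K \<Longrightarrow> \<tau> \<subseteq> \<sigma> \<Longrightarrow> \<tau> \<noteq> {} \<Longrightarrow> \<tau> \<in> K"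
  unfolding simplicial_complex_def by blast

lemma simplicial_complex_vertex: "simplicial_complex K \<Longrightarrow> \<sigma> \<in> K \<Longrightarrow> x \<in> \<sigma> \<Longrightarrow> {x} \<in> K"
  using simplicial_complex_face[of K \<sigma> "{x}"] by blast

lemma edge_path_Cons_Cons: "edge_path K (x # y # r) \<longleftrightarrow> {x, y} \<in> K \<and> edge_path K (y # r)"
  unfolding edge_path_def by (auto simp: nth_Cons split: nat.splits)

lemma edge_path_hd_vertex:
  assumes "simplicial_complex K" "edge_path K p" "p \<noteq> [hd p]"
  shows "{hd p} \<in> K"
proof (cases p)
  case (Cons x r)
  then show ?thesis
    using assms simplicial_complex_vertex[OF assms(1)] by (cases r) (auto simp: edge_path_Cons_Cons)
qed (use assms in \<open>simp add: edge_path_def\<close>)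

lemma edge_path_rev: "edge_path K s \<Longrightarrow> edge_path K (rev s)"
  unfolding edge_path_def
proof (intro conjI allI impI; elim conjE)
  fix i assume s: "\<forall>i. Suc i < length s \<longrightarrow> {s ! i, s ! Suc i} \<in> K" and i: "Suc i < length (rev s)"
  define j where "j = length s - Suc (Suc i)"
  have "Suc j < length s" "rev s ! i = s ! Suc j" "rev s ! Suc i = s ! j"
    using i by (auto simp: rev_nth j_def Suc_diff_Suc)
  then show "{rev s ! i, rev s ! Suc i} \<in> K" using s by (simp add: insert_commute)
qed simp

lemma edge_path_vertex:
  assumes "simplicial_complex K" "edge_path K s" "{last s} \<in> K" "x \<in> set s"
  shows "{x} \<in> K"
proof -
  obtain i where i: "i < length s" "x = s ! i" using assms(4) by (auto simp: in_set_conv_nth)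
  show ?thesis
  proof (cases "Suc i < length s")
    case True
    then show ?thesis
      using assms(1,2) i(2) simplicial_complex_vertex by (fastforce simp: edge_path_def)
  next
    case False
    then have "i = length s - 1" "s \<noteq> []" using i(1) by auto
    then show ?thesis using assms(3) i(2) by (simp add: last_conv_nth)
  qed
qed

lemma edge_equiv_cancel:
  "simplicial_complex K \<Longrightarrow> edge_path K s \<Longrightarrow> {hd s} \<in> K \<Longrightarrow> edge_equiv K (s @ rev s) [hd s]"
proof (induction s rule: induct_list012)
  case (3 x y r)
  then have xy: "{x, y} \<in> K" and yr: "edge_path K (y # r)" by (auto simp: edge_path_Cons_Cons)
  have "{y} \<in> K" using simplicial_complex_vertex[OF 3(3) xy] by simp
  then have "edge_equiv K ([x] @ ((y # r) @ rev (y # r)) @ [x]) ([x] @ [y] @ [x])"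
    using 3(2)[OF 3(3) yr] by (intro edge_equiv_append) simp
  also have "edge_equiv K ([x] @ [y] @ [x]) [x]"
    using edge_equiv_backtrack[OF xy] 3 by simp
  finally show ?case by simp
qed (simp_all add: edge_path_def edge_equiv_stutter)

lemma edge_equiv_cancel_rev:
  assumes "simplicial_complex K" "edge_path K s" "{last s} \<in> K"
  shows "edge_equiv K (rev s @ s) [last s]"
  using edge_equiv_cancel[OF assms(1) edge_path_rev[OF assms(2)]] assms(2,3)
  by (simp add: hd_rev edge_path_def)

lemma edge_equiv_stutter_last:
  assumes "s \<noteq> []" "{last s} \<in> K"
  shows "edge_equiv K (s @ [last s] @ r) (s @ r)"
proof -
  obtain s' where "s = s' @ [last s]" using assms(1) by (metis append_butlast_last_id)
  then show ?thesis
    using edge_equiv_append[OF edge_equiv_stutter[OF assms(2)], of s' r]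
    by (metis append.assoc append_Cons append_Nil)
qed

lemma edge_path_exists:
  assumes "(x, y) \<in> {(a, b). {a, b} \<in> K}\<^sup>*"
  shows "\<exists>s. edge_path K s \<and> hd s = x \<and> last s = y"
  using assms
proof (induction rule: converse_rtrancl_induct)
  case base
  show ?case by (intro exI[of _ "[y]"]) (simp add: edge_path_def)
next
  case (step x x')
  then obtain s where s: "edge_path K s" "hd s = x'" "last s = y" by blast
  then obtain r where "s = x' # r" by (cases s) (auto simp: edge_path_def)
  then show ?case using s step.hyps(1) by (intro exI[of _ "x # s"]) (simp add: edge_path_Cons_Cons)
qed

lemma elem_move_single:
  assumes "(p, q) \<in> elem_move K"
  shows "\<exists>\<sigma>\<in>K. card \<sigma> \<le> 3 \<and> (p, q) \<in> elem_move {\<sigma>}"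
  using assms unfolding elem_move_def[of K]
proof (elim UnE CollectE exE conjE)
  fix xs u v w ys
  assume "(p, q) = (xs @ [u, v, w] @ ys, xs @ [u, w] @ ys)" "{u, v, w} \<in> K"
  moreover have "card {u, v, w} \<le> 3" by (simp add: card_insert_if)
  ultimately show "\<exists>\<sigma>\<in>K. card \<sigma> \<le> 3 \<and> (p, q) \<in> elem_move {\<sigma>}"
    unfolding elem_move_def by blast
next
  fix xs u ys
  assume "(p, q) = (xs @ [u, u] @ ys, xs @ [u] @ ys)" "{u} \<in> K"
  then show "\<exists>\<sigma>\<in>K. card \<sigma> \<le> 3 \<and> (p, q) \<in> elem_move {\<sigma>}"
    unfolding elem_move_def by (intro bexI[of _ "{u}"]) auto
qed

lemma edge_equiv_finite_support:
  assumes "edge_equiv K p q"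
  shows "\<exists>F\<subseteq>K. finite F \<and> (\<forall>\<sigma>\<in>F. card \<sigma> \<le> 3) \<and> edge_equiv F p q"
  using assms unfolding edge_equiv_def[of K]
proof (induction rule: rtrancl_induct)
  case base
  show ?case by (intro exI[of _ "{}"]) simp
next
  case (step q r)
  obtain F where F: "F \<subseteq> K" "finite F" "\<forall>\<sigma>\<in>F. card \<sigma> \<le> 3" "edge_equiv F p q"
    using step.IH by blast
  obtain \<sigma> where \<sigma>: "\<sigma> \<in> K" "card \<sigma> \<le> 3" "(q, r) \<in> elem_move {\<sigma>} \<union> (elem_move {\<sigma>})\<inverse>"
    using step.hyps(2) elem_move_single by blast
  have "edge_equiv (insert \<sigma> F) q r"
    using edge_equiv_mono[of "{\<sigma>}"] \<sigma>(3) by (simp add: edge_equiv_def r_into_rtrancl)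
  moreover have "edge_equiv (insert \<sigma> F) p q" using edge_equiv_mono[OF _ F(4)] by blast
  ultimately show ?case using F \<sigma> by (intro exI[of _ "insert \<sigma> F"]) (auto intro: edge_equiv_trans)
qed

section \<open>Substitution of paths\<close>

text \<open>In \<open>subst_path s f\<close> the block \<open>s x y\<close> runs from \<open>f x\<close> up to but excluding \<open>f y\<close>;
  the last vertex contributes \<open>f\<close> of itself.\<close>

fun subst_path :: "('v \<Rightarrow> 'v \<Rightarrow> 'v list) \<Rightarrow> ('v \<Rightarrow> 'v) \<Rightarrow> 'v list \<Rightarrow> 'v list" where
  "subst_path s f [] = []"
| "subst_path s f [x] = [f x]"
| "subst_path s f (x # y # r) = s x y @ subst_path s f (y # r)"

lemma subst_path_append_Cons: "\<exists>P. \<forall>r. subst_path s f (xs @ u # r) = P @ subst_path s f (u # r)"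
proof (induction xs)
  case (Cons x xs)
  then obtain P where P: "\<forall>r. subst_path s f (xs @ u # r) = P @ subst_path s f (u # r)" by blast
  have "subst_path s f (x # xs @ u # r) = s x (hd (xs @ [u])) @ subst_path s f (xs @ u # r)" for r
    by (cases xs) simp_all
  then show ?case using P by (intro exI[of _ "s x (hd (xs @ [u])) @ P"]) simp
qed simp

lemma subst_path_identity:
  assumes "\<And>x y. {x, y} \<in> K \<Longrightarrow> s x y = [x]" and "f (last p) = last p"
  shows "edge_path K p \<Longrightarrow> subst_path s f p = p"
  using assms(2) by (induction p rule: induct_list012) (auto simp: edge_path_Cons_Cons assms(1))

locale path_substitution =
  fixes K K' :: "'v set set" and s :: "'v \<Rightarrow> 'v \<Rightarrow> 'v list" and f :: "'v \<Rightarrow> 'v"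
  assumes step_starts: "\<exists>T. s u v = f u # T"
    and triangle_move: "{u, v, w} \<in> K \<Longrightarrow> edge_equiv K' (s u v @ s v w @ [f w]) (s u w @ [f w])"
    and stutter_move: "{u} \<in> K \<Longrightarrow> edge_equiv K' (s u u @ [f u]) [f u]"
begin

lemma subst_path_Cons: "\<exists>T. subst_path s f (w # r) = f w # T"
proof (cases r)
  case (Cons v r')
  obtain T where "s w v = f w # T" using step_starts by blast
  then show ?thesis using Cons by simp
qed simp

lemma edge_equiv_subst_path_elem_move:
  assumes "(p, q) \<in> elem_move K"
  shows "edge_equiv K' (subst_path s f p) (subst_path s f q)"
  using assms unfolding elem_move_def
proof (elim UnE CollectE exE conjE)
  fix xs u v w ys
  assume pq: "(p, q) = (xs @ [u, v, w] @ ys, xs @ [u, w] @ ys)" and uvw: "{u, v, w} \<in> K"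
  obtain P where P: "\<forall>r. subst_path s f (xs @ u # r) = P @ subst_path s f (u # r)"
    using subst_path_append_Cons[of s f xs u] by blast
  obtain T where T: "subst_path s f (w # ys) = f w # T" using subst_path_Cons by blast
  have "edge_equiv K' (P @ (s u v @ s v w @ [f w]) @ T) (P @ (s u w @ [f w]) @ T)"
    using triangle_move[OF uvw] by (rule edge_equiv_append)
  then show ?thesis using pq P T by simp
next
  fix xs u ys
  assume pq: "(p, q) = (xs @ [u, u] @ ys, xs @ [u] @ ys)" and u: "{u} \<in> K"
  obtain P where P: "\<forall>r. subst_path s f (xs @ u # r) = P @ subst_path s f (u # r)"
    using subst_path_append_Cons[of s f xs u] by blast
  obtain T where T: "subst_path s f (u # ys) = f u # T" using subst_path_Cons by blast
  have "edge_equiv K' (P @ (s u u @ [f u]) @ T) (P @ [f u] @ T)"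
    using stutter_move[OF u] by (rule edge_equiv_append)
  then show ?thesis using pq P T by simp
qed

lemma edge_equiv_subst_path:
  "edge_equiv K p q \<Longrightarrow> edge_equiv K' (subst_path s f p) (subst_path s f q)"
  unfolding edge_equiv_def[of K]
proof (induction rule: rtrancl_induct)
  case (step q r)
  then have "edge_equiv K' (subst_path s f q) (subst_path s f r)"
    using edge_equiv_subst_path_elem_move edge_equiv_sym by blast
  with step.IH show ?case by (rule edge_equiv_trans)
qed simp

end

lemma edge_equiv_degenerate_triangle:
  assumes "u = v \<or> v = w \<or> u = w"
    and starts: "\<exists>T. s u w = f u # T"
    and stutter: "\<And>x. x \<in> {u, v, w} \<Longrightarrow> edge_equiv K (s x x @ [f x]) [f x]"
    and back_and_forth: "u = w \<Longrightarrow> edge_equiv K (s u v @ s v u @ [f u]) [f u]"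
  shows "edge_equiv K (s u v @ s v w @ [f w]) (s u w @ [f w])"
  using assms(1)
proof (elim disjE)
  assume "u = v"
  obtain T where "s u w @ [f w] = [f u] @ T" using starts by auto
  then show ?thesis using edge_equiv_append_right[OF stutter[of u], of T] \<open>u = v\<close> by simp
next
  assume "v = w"
  then show ?thesis using edge_equiv_append_left[OF stutter[of v]] by simp
next
  assume "u = w"
  then show ?thesis
    using back_and_forth stutter[of u] by (metis edge_equiv_sym edge_equiv_trans insertI1)
qed

section \<open>Pushing a null-homotopy into a subcomplex\<close>

definition shares_no_edge :: "'v set set \<Rightarrow> 'v set set \<Rightarrow> bool" where
  "shares_no_edge K Z \<longleftrightarrow> (\<forall>t\<in>K - Z. card t = 3 \<longrightarrow> (\<forall>e\<in>Z. card e = 2 \<longrightarrow> \<not> e \<subseteq> t))"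

lemma shares_no_edgeD:
  assumes "shares_no_edge K Z" "{a, b, c} \<in> K" "card {a, b, c} = 3" "{a, b, c} \<notin> Z"
  shows "{a, b} \<notin> Z"
proof
  assume "{a, b} \<in> Z"
  moreover have "card {a, b} = 2" using assms(3) by (auto simp: card_insert_if split: if_splits)
  ultimately show False using assms unfolding shares_no_edge_def by blast
qed

text \<open>\<open>detour\<close> sends every step outside \<open>Z\<close> on a round trip through the base point \<open>z0\<close>.
  Triangles of \<open>Z\<close> are kept, and a triangle sharing no edge with \<open>Z\<close> becomes a loop through
  \<open>z0\<close> that cancels.\<close>

locale base_point_paths =
  fixes Z :: "'v set set" and z0 :: 'v and \<sigma> :: "'v \<Rightarrow> 'v list" and f :: "'v \<Rightarrow> 'v"
  assumes complex: "simplicial_complex Z" and base_vertex: "{z0} \<in> Z"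
    and path: "edge_path Z (\<sigma> x)" and path_hd: "hd (\<sigma> x) = f x" and path_last: "last (\<sigma> x) = z0"
    and fixes_vertices: "{x} \<in> Z \<Longrightarrow> f x = x"
begin

definition detour :: "'v \<Rightarrow> 'v \<Rightarrow> 'v list" where
  "detour x y = (if {x, y} \<in> Z then [x] else \<sigma> x @ rev (\<sigma> y))"

lemma path_ne: "\<sigma> x \<noteq> []"
  using path by (simp add: edge_path_def)

lemma f_vertex: "{f x} \<in> Z"
  using edge_path_vertex[OF complex path, of x "f x"] path_hd path_last base_vertex path_ne
  by (metis hd_in_set)

lemma f_edge: "{x, y} \<in> Z \<Longrightarrow> f x = x"
  using fixes_vertices simplicial_complex_vertex[OF complex] by blast

lemma detour_starts: "\<exists>T. detour u v = f u # T"
  using path_hd[of u] path_ne[of u] f_edge[of u v] by (cases "\<sigma> u") (auto simp: detour_def)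

lemma edge_equiv_through_base: "edge_equiv Z (A @ rev (\<sigma> v) @ \<sigma> v @ B) (A @ [z0] @ B)"
  using edge_equiv_append[OF edge_equiv_cancel_rev[OF complex path]] path_last base_vertex by simp

lemma edge_equiv_drop_base: "edge_equiv Z (\<sigma> u @ [z0] @ B) (\<sigma> u @ B)"
  using edge_equiv_stutter_last[OF path_ne, of u Z B] path_last base_vertex by simp

lemma edge_equiv_path_retract: "edge_equiv Z (\<sigma> u @ rev (\<sigma> u) @ [f u]) [f u]"
proof -
  have "edge_equiv Z ((\<sigma> u @ rev (\<sigma> u)) @ [f u]) ([f u] @ [f u])"
    using edge_equiv_append_right[OF edge_equiv_cancel[OF complex path]] path_hd f_vertex by simp
  also have "edge_equiv Z ([f u] @ [f u]) [f u]" using edge_equiv_stutter[OF f_vertex] by simp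
  finally show ?thesis by simp
qed

lemma detour_stutter: "edge_equiv Z (detour u u @ [f u]) [f u]"
  using edge_equiv_path_retract[of u] fixes_vertices[of u] edge_equiv_stutter[of u Z]
  by (cases "{u} \<in> Z") (simp_all add: detour_def)

lemma detour_back_and_forth: "edge_equiv Z (detour u v @ detour v u @ [f u]) [f u]"
proof (cases "{u, v} \<in> Z")
  case True
  then show ?thesis
    using f_edge[OF True] edge_equiv_backtrack[OF True simplicial_complex_vertex[OF complex True]]
    by (simp add: detour_def insert_commute)
next
  case False
  then have "detour u v @ detour v u @ [f u] = \<sigma> u @ rev (\<sigma> v) @ \<sigma> v @ rev (\<sigma> u) @ [f u]"
    by (simp add: detour_def insert_commute)
  also have "edge_equiv Z \<dots> (\<sigma> u @ [z0] @ rev (\<sigma> u) @ [f u])" by (rule edge_equiv_through_base)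
  also have "edge_equiv Z \<dots> (\<sigma> u @ rev (\<sigma> u) @ [f u])" by (rule edge_equiv_drop_base)
  also have "edge_equiv Z \<dots> [f u]" by (rule edge_equiv_path_retract)
  finally show ?thesis .
qed

lemma detour_triangle:
  assumes K: "shares_no_edge K Z" and uvw: "{u, v, w} \<in> K"
  shows "edge_equiv Z (detour u v @ detour v w @ [f w]) (detour u w @ [f w])"
proof (cases "card {u, v, w} = 3")
  case False
  then have "u = v \<or> v = w \<or> u = w" by (auto simp: card_insert_if split: if_splits)
  then show ?thesis
    by (rule edge_equiv_degenerate_triangle)
      (auto intro: detour_starts detour_stutter detour_back_and_forth)
next
  case card: True
  show ?thesis
  proof (cases "{u, v, w} \<in> Z")
    case True
    then have "{u, v} \<in> Z" "{v, w} \<in> Z" "{u, w} \<in> Z" "f w = w"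
      using simplicial_complex_face[OF complex True] f_edge[of w v] by (auto simp: insert_commute)
    then show ?thesis using edge_equiv_triangle[OF True] by (simp add: detour_def)
  next
    case False
    then have "{u, v} \<notin> Z" "{v, w} \<notin> Z" "{u, w} \<notin> Z"
      using shares_no_edgeD[OF K, of u v w] shares_no_edgeD[OF K, of v w u]
        shares_no_edgeD[OF K, of u w v] uvw card
      by (simp_all add: insert_commute)
    then have "detour u v @ detour v w @ [f w] = \<sigma> u @ rev (\<sigma> v) @ \<sigma> v @ rev (\<sigma> w) @ [f w]"
      by (simp add: detour_def)
    also have "edge_equiv Z \<dots> (\<sigma> u @ [z0] @ rev (\<sigma> w) @ [f w])" by (rule edge_equiv_through_base)
    also have "edge_equiv Z \<dots> (\<sigma> u @ rev (\<sigma> w) @ [f w])" by (rule edge_equiv_drop_base)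
    also have "\<dots> = detour u w @ [f w]" using \<open>{u, w} \<notin> Z\<close> by (simp add: detour_def)
    finally show ?thesis .
  qed
qed

lemma path_substitution_detour: "shares_no_edge K Z \<Longrightarrow> path_substitution K Z detour f"
  by unfold_locales (simp_all add: detour_starts detour_stutter detour_triangle)

end

lemma edge_equiv_in_subcomplex:
  assumes Z: "simplicial_complex Z" "sc_connected Z" and K: "shares_no_edge K Z"
    and p: "edge_path Z p" "{last p} \<in> Z" and u: "{u} \<in> Z"
    and null: "edge_equiv K p [u]"
  shows "edge_equiv Z p [u]"
proof -
  obtain z0 where z0: "{z0} \<in> Z"
    using Z unfolding sc_connected_def simplicial_complex_def
    by (metis all_not_in_conv insert_subset subsetI)
  have connected: "(x, z0) \<in> {(a, b). {a, b} \<in> Z}\<^sup>*" if "{x} \<in> Z" for x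
    using Z(2) that z0 unfolding sc_connected_def vertices_def by blast
  define f where "f x = (if {x} \<in> Z then x else z0)" for x
  define \<sigma> where
    "\<sigma> x = (if {x} \<in> Z then (SOME s. edge_path Z s \<and> hd s = x \<and> last s = z0) else [z0])" for x
  have \<sigma>: "edge_path Z (\<sigma> x) \<and> hd (\<sigma> x) = f x \<and> last (\<sigma> x) = z0" for x
  proof (cases "{x} \<in> Z")
    case True
    then show ?thesis
      using someI_ex[OF edge_path_exists[OF connected[OF True]]] by (simp add: \<sigma>_def f_def)
  qed (simp add: \<sigma>_def f_def edge_path_def)
  interpret base_point_paths Z z0 \<sigma> f
    using Z(1) z0 \<sigma> by unfold_locales (simp_all add: f_def)
  interpret path_substitution K Z detour f
    using K by (rule path_substitution_detour)
  have "subst_path detour f p = p"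
    using p by (intro subst_path_identity[of Z]) (simp_all add: detour_def f_def)
  moreover have "subst_path detour f [u] = [u]" using u by (simp add: f_def)
  ultimately show ?thesis using edge_equiv_subst_path[OF null] by simp
qed

section \<open>Collapsing free triangles\<close>

text \<open>An elementary collapse: \<open>reroute\<close> pushes paths across the triangle, replacing steps
  along the free edge \<open>{a, b}\<close> by the two other sides through \<open>c\<close>.\<close>

locale collapsible_triangle =
  fixes K :: "'v set set" and a b c :: 'v
  assumes complex: "simplicial_complex K" and triangle: "{a, b, c} \<in> K" "card {a, b, c} = 3"
    and free: "\<And>t. t \<in> K \<Longrightarrow> card t = 3 \<Longrightarrow> {a, b} \<subseteq> t \<Longrightarrow> t = {a, b, c}"
begin

abbreviation collapsed :: "'v set set" where
  "collapsed \<equiv> K - {{a, b, c}}"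

definition reroute :: "'v \<Rightarrow> 'v \<Rightarrow> 'v list" where
  "reroute x y = (if {x, y} = {a, b} then [x, c] else [x])"

lemma triangle_distinct: "a \<noteq> b" "a \<noteq> c" "b \<noteq> c"
  using triangle(2) by (auto simp: card_insert_if split: if_splits)

lemma small_simplex_collapsed: "\<sigma> \<in> K \<Longrightarrow> card \<sigma> \<le> 2 \<Longrightarrow> \<sigma> \<in> collapsed"
  using triangle(2) by auto

lemma vertex_collapsed: "\<sigma> \<in> K \<Longrightarrow> x \<in> \<sigma> \<Longrightarrow> {x} \<in> collapsed"
  by (rule small_simplex_collapsed) (simp_all add: simplicial_complex_vertex[OF complex])

lemma edge_collapsed: "{x, y} \<in> K \<Longrightarrow> {x, y} \<in> collapsed"
  by (rule small_simplex_collapsed) (simp_all add: card_insert_if)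

lemma edge_equiv_around_apex: "v = a \<or> v = b \<Longrightarrow> edge_equiv collapsed [c, v, c] [c]"
  using simplicial_complex_face[OF complex triangle(1), of "{c, v}"]
    vertex_collapsed[OF triangle(1)]
  by (intro edge_equiv_backtrack edge_collapsed) auto

lemma reroute_loop: "reroute u u = [u]"
  using triangle_distinct by (auto simp: reroute_def doubleton_eq_iff)

lemma reroute_stutter: "{u} \<in> K \<Longrightarrow> edge_equiv collapsed (reroute u u @ [u]) [u]"
  using edge_equiv_stutter[OF vertex_collapsed[OF _ singletonI]] by (simp add: reroute_loop)

lemma reroute_back_and_forth:
  assumes uv: "{u, v} \<in> K"
  shows "edge_equiv collapsed (reroute u v @ reroute v u @ [u]) [u]"
proof (cases "{u, v} = {a, b}")
  case True
  then have v: "v = a \<or> v = b" by (auto simp: doubleton_eq_iff)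
  have "reroute u v @ reroute v u @ [u] = [u] @ [c, v, c] @ [u]"
    using True by (simp add: reroute_def insert_commute)
  also have "edge_equiv collapsed \<dots> ([u] @ [c] @ [u])"
    by (rule edge_equiv_append[OF edge_equiv_around_apex[OF v]])
  also have "edge_equiv collapsed ([u] @ [c] @ [u]) [u]"
  proof -
    have "{u, c} \<in> collapsed"
      using True by (intro edge_collapsed simplicial_complex_face[OF complex triangle(1)])
        (auto simp: doubleton_eq_iff)
    then show ?thesis using edge_equiv_backtrack[OF _ vertex_collapsed[OF uv insertI1]] by simp
  qed
  finally show ?thesis .
next
  case False
  then show ?thesis
    using edge_equiv_backtrack[OF edge_collapsed[OF uv] vertex_collapsed[OF uv]]
    by (simp add: reroute_def insert_commute)
qed

lemma reroute_triangle_self: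
  assumes "{u, v, w} = {a, b, c}" "card {u, v, w} = 3"
  shows "edge_equiv collapsed (reroute u v @ reroute v w @ [w]) (reroute u w @ [w])"
proof -
  have "u \<noteq> v" "v \<noteq> w" "u \<noteq> w" using assms(2) by (auto simp: card_insert_if split: if_splits)
  moreover have "u \<in> {a, b, c}" "v \<in> {a, b, c}" "w \<in> {a, b, c}" using assms(1) by blast+
  ultimately consider "v = c" "{u, w} = {a, b}" | "u = c" "{v, w} = {a, b}"
    | "w = c" "{u, v} = {a, b}"
    using triangle_distinct by (elim insertE emptyE; auto simp: insert_commute)
  then show ?thesis
  proof cases
    case 1
    then show ?thesis using triangle_distinct by (auto simp: reroute_def doubleton_eq_iff)
  next
    case 2
    then have "reroute u v @ reroute v w @ [w] = [c, v, c] @ [w]" "reroute u w @ [w] = [c] @ [w]"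
      and "v = a \<or> v = b"
      using triangle_distinct by (auto simp: reroute_def doubleton_eq_iff)
    then show ?thesis using edge_equiv_append_right[OF edge_equiv_around_apex] by metis
  next
    case 3
    then have "reroute u v @ reroute v w @ [w] = [u] @ [c, v, c]" "reroute u w @ [w] = [u] @ [c]"
      and "v = a \<or> v = b"
      using triangle_distinct by (auto simp: reroute_def doubleton_eq_iff)
    then show ?thesis using edge_equiv_append_left[OF edge_equiv_around_apex] by metis
  qed
qed

lemma reroute_triangle:
  assumes uvw: "{u, v, w} \<in> K"
  shows "edge_equiv collapsed (reroute u v @ reroute v w @ [w]) (reroute u w @ [w])"
proof (cases "card {u, v, w} = 3")
  case False
  have "edge_equiv collapsed (reroute u v @ reroute v w @ [id w]) (reroute u w @ [id w])"
  proof (rule edge_equiv_degenerate_triangle)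
    show "u = v \<or> v = w \<or> u = w" using False by (auto simp: card_insert_if split: if_splits)
    show "\<exists>T. reroute u w = id u # T" by (simp add: reroute_def)
    show "edge_equiv collapsed (reroute x x @ [id x]) [id x]" if "x \<in> {u, v, w}" for x
      using reroute_stutter simplicial_complex_vertex[OF complex uvw that] by simp
    show "edge_equiv collapsed (reroute u v @ reroute v u @ [id u]) [id u]" if "u = w"
      using reroute_back_and_forth uvw that by (simp add: insert_commute)
  qed
  then show ?thesis by simp
next
  case card: True
  show ?thesis
  proof (cases "{u, v, w} = {a, b, c}")
    case True
    then show ?thesis using card by (rule reroute_triangle_self)
  next
    case False
    then have "{a, b} \<noteq> {u, v}" "{a, b} \<noteq> {v, w}" "{a, b} \<noteq> {u, w}"
      using free[OF uvw card] by auto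
    moreover have "{u, v, w} \<in> collapsed" using uvw False by simp
    ultimately show ?thesis
      using edge_equiv_triangle[of u v w collapsed]
      by (simp add: reroute_def eq_commute[of "{a, b}"])
  qed
qed

lemma edge_equiv_collapsed:
  assumes pq: "edge_equiv K p q" and L: "edge_path L p" "edge_path L q" "{a, b} \<notin> L"
  shows "edge_equiv collapsed p q"
proof -
  interpret path_substitution K collapsed reroute id
  proof
    show "\<exists>T. reroute u v = id u # T" for u v by (simp add: reroute_def)
  qed (simp_all add: reroute_stutter reroute_triangle)
  have "subst_path reroute id r = r" if "edge_path L r" for r
    using that L(3) by (intro subst_path_identity[of L]) (auto simp: reroute_def)
  then show ?thesis using edge_equiv_subst_path[OF pq] L(1,2) by simp
qed

end

section \<open>Fillings by triangles outside a subcomplex\<close>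

text \<open>The whole 1-skeleton of \<open>X\<close> is kept, so that an equivalence in \<open>X\<close> is recorded by the
  triangles \<open>D\<close> outside \<open>Z\<close> that it uses.\<close>

definition extend_by :: "'v set set \<Rightarrow> 'v set set \<Rightarrow> 'v set set \<Rightarrow> 'v set set" where
  "extend_by Z X D = Z \<union> D \<union> {\<sigma> \<in> X. card \<sigma> \<le> 2}"

definition triangles_outside :: "'v set set \<Rightarrow> 'v set set \<Rightarrow> 'v set set" where
  "triangles_outside Z X = {t \<in> X. card t = 3 \<and> t \<notin> Z}"

lemma simplicial_complex_extend_by:
  assumes X: "simplicial_complex X" and Z: "subcomplex Z X" and D: "D \<subseteq> triangles_outside Z X"
  shows "simplicial_complex (extend_by Z X D)"
  unfolding simplicial_complex_def
proof (rule conjI; intro ballI allI impI)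
  have "extend_by Z X D \<subseteq> X" using Z D
    by (auto simp: extend_by_def subcomplex_def triangles_outside_def)
  then show "finite \<sigma> \<and> \<sigma> \<noteq> {}" if "\<sigma> \<in> extend_by Z X D" for \<sigma>
    using X that by (auto simp: simplicial_complex_def)
  fix \<sigma> \<tau> assume \<sigma>: "\<sigma> \<in> extend_by Z X D" and \<tau>: "\<tau> \<subseteq> \<sigma> \<and> \<tau> \<noteq> {}"
  have "\<sigma> \<in> X" using \<sigma> \<open>extend_by Z X D \<subseteq> X\<close> by blast
  then have "\<tau> \<in> X" "finite \<sigma>" using simplicial_complex_face[OF X] \<tau> X
    by (auto simp: simplicial_complex_def)
  then have "\<tau> = \<sigma> \<or> card \<tau> < card \<sigma>" using \<tau> by (meson psubsetI psubset_card_mono)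
  moreover have "card \<sigma> \<le> 3" if "\<sigma> \<in> D" using that D by (simp add: triangles_outside_def subset_iff)
  moreover have "\<tau> \<in> Z" if "\<sigma> \<in> Z" using that \<tau> Z simplicial_complex_face
    by (auto simp: subcomplex_def)
  ultimately show "\<tau> \<in> extend_by Z X D" using \<sigma> \<open>\<tau> \<in> X\<close> by (auto simp: extend_by_def)
qed

definition has_free_edge :: "'v set set \<Rightarrow> 'v set set \<Rightarrow> 'v set \<Rightarrow> bool" where
  "has_free_edge Z D \<tau> \<longleftrightarrow> (\<exists>e. card e = 2 \<and> e \<subseteq> \<tau> \<and> e \<notin> Z \<and> (\<forall>t\<in>D. e \<subseteq> t \<longrightarrow> t = \<tau>))"

lemma has_free_edge_subset: "has_free_edge Z D \<tau> \<Longrightarrow> D' \<subseteq> D \<Longrightarrow> has_free_edge Z D' \<tau>"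
  unfolding has_free_edge_def by blast

lemma edge_equiv_extend_by_collapse:
  assumes X: "simplicial_complex X" and Z: "subcomplex Z X"
    and D: "D \<subseteq> triangles_outside Z X" "\<tau> \<in> D" and free: "has_free_edge Z D \<tau>"
    and p: "edge_path Z p" and q: "edge_path Z q" and pq: "edge_equiv (extend_by Z X D) p q"
  shows "edge_equiv (extend_by Z X (D - {\<tau>})) p q"
proof -
  obtain e where e: "card e = 2" "e \<subseteq> \<tau>" "e \<notin> Z" and e_free: "\<forall>t\<in>D. e \<subseteq> t \<longrightarrow> t = \<tau>"
    using free by (auto simp: has_free_edge_def)
  have \<tau>: "\<tau> \<in> X" "card \<tau> = 3" "\<tau> \<notin> Z" using D by (auto simp: triangles_outside_def)
  obtain a b where ab: "e = {a, b}" using e(1) by (meson card_2_iff)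
  have "finite \<tau>" using \<tau>(2) by (simp add: card_ge_0_finite)
  then have "card (\<tau> - e) = 1" using \<tau>(2) e(1,2) by (simp add: card_Diff_subset finite_subset)
  then obtain c where "\<tau> - e = {c}" by (meson card_1_singletonE)
  then have \<tau>_abc: "\<tau> = {a, b, c}" using e(2) ab by blast
  have Zc: "simplicial_complex Z" using Z by (simp add: subcomplex_def)
  interpret collapsible_triangle "extend_by Z X D" a b c
  proof
    show "simplicial_complex (extend_by Z X D)" using simplicial_complex_extend_by[OF X Z D(1)] .
    show "{a, b, c} \<in> extend_by Z X D" "card {a, b, c} = 3"
      using D(2) \<tau> \<tau>_abc by (auto simp: extend_by_def)
    show "t = {a, b, c}" if "t \<in> extend_by Z X D" "card t = 3" "{a, b} \<subseteq> t" for t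
    proof -
      have "t \<notin> Z" using simplicial_complex_face[OF Zc _ that(3)] e(3) ab by blast
      then show ?thesis using that e_free ab \<tau>_abc by (auto simp: extend_by_def)
    qed
  qed
  have "edge_equiv collapsed p q" using pq p q e(3) ab by (intro edge_equiv_collapsed) simp_all
  moreover have "collapsed = extend_by Z X (D - {\<tau>})" using \<tau> \<tau>_abc by (auto simp: extend_by_def)
  ultimately show ?thesis by simp
qed

lemma edge_equiv_extend_by_collapse_all:
  assumes X: "simplicial_complex X" and Z: "subcomplex Z X"
    and p: "edge_path Z p" and q: "edge_path Z q" and R: "finite R"
  shows "R \<subseteq> D \<Longrightarrow> D \<subseteq> triangles_outside Z X \<Longrightarrow> (\<forall>\<tau>\<in>R. has_free_edge Z D \<tau>) \<Longrightarrow>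
    edge_equiv (extend_by Z X D) p q \<Longrightarrow> edge_equiv (extend_by Z X (D - R)) p q"
  using R
proof (induction R arbitrary: D rule: finite_induct)
  case (insert \<tau> R)
  have "\<tau> \<in> D" "has_free_edge Z D \<tau>" using insert.prems(1,3) by simp_all
  then have "edge_equiv (extend_by Z X (D - {\<tau>})) p q"
    using edge_equiv_extend_by_collapse[OF X Z insert.prems(2)] p q insert.prems(4) by blast
  moreover have "R \<subseteq> D - {\<tau>}" "D - {\<tau>} \<subseteq> triangles_outside Z X"
    using insert.prems(1,2) insert.hyps(2) by auto
  moreover have "\<forall>\<tau>'\<in>R. has_free_edge Z (D - {\<tau>}) \<tau>'"
    using insert.prems(3) has_free_edge_subset[of Z D _ "D - {\<tau>}"] by blast
  ultimately have "edge_equiv (extend_by Z X (D - {\<tau>} - R)) p q"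
    using insert.IH by blast
  then show ?case by (simp add: Diff_insert2[of D \<tau> R])
qed simp

lemma extend_by_finite_support:
  assumes Z: "subcomplex Z X" and pq: "edge_equiv X p q"
  shows "\<exists>D. finite D \<and> D \<subseteq> triangles_outside Z X \<and> edge_equiv (extend_by Z X D) p q"
proof -
  obtain F where F: "F \<subseteq> X" "finite F" "\<forall>\<sigma>\<in>F. card \<sigma> \<le> 3" "edge_equiv F p q"
    using edge_equiv_finite_support[OF pq] by blast
  have "F \<subseteq> extend_by Z X (F \<inter> triangles_outside Z X)"
  proof
    fix \<sigma> assume "\<sigma> \<in> F"
    then have "\<sigma> \<in> X" "card \<sigma> \<le> 3" using F by auto
    then show "\<sigma> \<in> extend_by Z X (F \<inter> triangles_outside Z X)"
      using \<open>\<sigma> \<in> F\<close> by (cases "card \<sigma> = 3") (auto simp: extend_by_def triangles_outside_def)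
  qed
  then show ?thesis using F
    by (intro exI[of _ "F \<inter> triangles_outside Z X"]) (auto intro: edge_equiv_mono)
qed

section \<open>Essential and thick enlargements\<close>

definition faces :: "'v set set \<Rightarrow> 'v set set" where
  "faces S = {\<sigma>. \<exists>t\<in>S. \<sigma> \<subseteq> t \<and> \<sigma> \<noteq> {}}"

lemma faces_subset:
  assumes "simplicial_complex X" "S \<subseteq> X"
  shows "faces S \<subseteq> X"
  using simplicial_complex_face[OF assms(1)] assms(2) unfolding faces_def by blast

lemma simplicial_complex_Un_faces:
  assumes Z: "simplicial_complex Z" and X: "simplicial_complex X" "S \<subseteq> X"
  shows "simplicial_complex (Z \<union> faces S)"
  unfolding simplicial_complex_def
proof (rule conjI; intro ballI allI impI)
  fix \<sigma> assume "\<sigma> \<in> Z \<union> faces S"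
  then have "\<sigma> \<in> Z \<or> \<sigma> \<in> X" using faces_subset[OF X] by blast
  then show "finite \<sigma> \<and> \<sigma> \<noteq> {}" using Z X(1) by (auto simp: simplicial_complex_def)
next
  fix \<sigma> \<tau> assume "\<sigma> \<in> Z \<union> faces S" "\<tau> \<subseteq> \<sigma> \<and> \<tau> \<noteq> {}"
  then show "\<tau> \<in> Z \<union> faces S"
    using simplicial_complex_face[OF Z] unfolding faces_def by blast
qed

lemma triangles_at_mono: "Y \<subseteq> Y' \<Longrightarrow> triangles_at Y e \<subseteq> triangles_at Y' e"
  unfolding triangles_at_def by blast

lemma card_le_degree:
  assumes "T \<subseteq> triangles_at Y e" "finite T"
  shows "enat (card T) \<le> degree Y e"
  using assms card_mono by (auto simp: degree_def)

lemma degree_Suc_le: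
  assumes "Y \<subseteq> Y'" "t \<in> triangles_at Y' e" "t \<notin> Y"
  shows "degree Y e + 1 \<le> degree Y' e"
proof (cases "finite (triangles_at Y' e)")
  case True
  have "t \<notin> triangles_at Y e" using assms(3) by (simp add: triangles_at_def)
  moreover have "finite (triangles_at Y e)"
    using True triangles_at_mono[OF assms(1)] finite_subset by blast
  moreover have "card (insert t (triangles_at Y e)) \<le> card (triangles_at Y' e)"
    using True assms(2) triangles_at_mono[OF assms(1)] by (intro card_mono) auto
  ultimately show ?thesis using True by (simp add: degree_def one_enat_def)
qed (simp add: degree_def)

lemma degree_mono: "Y \<subseteq> Y' \<Longrightarrow> degree Y e \<le> degree Y' e"
  using triangles_at_mono[of Y Y' e] by (auto simp: degree_def intro: card_mono finite_subset)

lemma two_le_degree_Un_faces: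
  assumes Z: "essential Z" and S: "\<And>t. t \<in> S \<Longrightarrow> card t = 3"
    and no_free: "\<And>t. t \<in> S \<Longrightarrow> \<not> has_free_edge Z S t" and e: "e \<in> edges (Z \<union> faces S)"
  shows "2 \<le> degree (Z \<union> faces S) e"
proof (cases "e \<in> Z")
  case True
  then have "2 \<le> degree Z e" using Z e by (simp add: essential_def edges_def)
  also have "\<dots> \<le> degree (Z \<union> faces S) e" by (rule degree_mono) simp
  finally show ?thesis .
next
  case False
  then obtain t where t: "t \<in> S" "e \<subseteq> t" using e by (auto simp: edges_def faces_def)
  then obtain t' where t': "t' \<in> S" "t' \<noteq> t" "e \<subseteq> t'"
    using no_free[OF t(1)] e False unfolding has_free_edge_def edges_def by blast
  have "{t, t'} \<subseteq> triangles_at (Z \<union> faces S) e"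
    using t t' S by (fastforce simp: triangles_at_def faces_def)
  from card_le_degree[OF this] show ?thesis using t'(2)
    by (simp add: numeral_eq_enat eval_nat_numeral)
qed

lemma essential_Un_faces:
  assumes Z: "essential Z"
    and S: "\<And>t. t \<in> S \<Longrightarrow> card t = 3" and no_free: "\<And>t. t \<in> S \<Longrightarrow> \<not> has_free_edge Z S t"
  shows "essential (Z \<union> faces S)"
  unfolding essential_def
proof (intro conjI ballI)
  let ?W = "Z \<union> faces S"
  have S_fin: "finite t" if "t \<in> S" for t using S[OF that] by (simp add: card_ge_0_finite)
  show "dim_le2 ?W"
    using Z S S_fin card_mono by (fastforce simp: essential_def dim_le2_def faces_def)
  show "degree ?W e \<ge> 2" if "e \<in> edges ?W" for e
    using Z S no_free that by (rule two_le_degree_Un_faces)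
  show "\<exists>e\<in>edges ?W. v \<in> e" if v: "v \<in> vertices ?W" for v
  proof -
    obtain \<sigma> where \<sigma>: "\<sigma> \<in> ?W" "v \<in> \<sigma>" using v by (auto simp: vertices_def)
    show ?thesis
    proof (cases "\<sigma> \<in> Z")
      case True
      then have "v \<in> vertices Z" using \<sigma>(2) by (auto simp: vertices_def)
      then show ?thesis using Z by (auto simp: essential_def edges_def)
    next
      case False
      then obtain t where t: "t \<in> S" "v \<in> t" using \<sigma> by (auto simp: faces_def)
      then have "card (t - {v}) = 2" using S S_fin by simp
      then obtain w where "w \<in> t" "w \<noteq> v" by (metis Diff_iff card_2_iff insertI1 singletonD)
      then have "{v, w} \<in> edges ?W" using t by (auto simp: edges_def faces_def)
      then show ?thesis by blast
    qed
  qed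
qed

lemma thick_Un_faces:
  assumes W: "essential (Z \<union> faces S)" and Z: "essential Z"
    and t: "t \<in> S" "t \<notin> Z" "card t = 3" and e: "e \<in> Z" "card e = 2" "e \<subseteq> t"
  shows "thick (Z \<union> faces S)"
proof -
  have "t \<in> triangles_at (Z \<union> faces S) e" using t e(3) by (auto simp: triangles_at_def faces_def)
  have "(3::enat) = 2 + 1" by simp
  also have "\<dots> \<le> degree Z e + 1"
    using Z e by (intro add_right_mono) (simp add: essential_def edges_def)
  also have "\<dots> \<le> degree (Z \<union> faces S) e"
    using \<open>t \<in> triangles_at (Z \<union> faces S) e\<close> t(2) by (intro degree_Suc_le) auto
  finally have "degree (Z \<union> faces S) e \<ge> 3" .
  moreover have "e \<in> edges (Z \<union> faces S)" using e by (simp add: edges_def)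
  ultimately show ?thesis using W by (auto simp: thick_def)
qed

section \<open>Group actions on simplices\<close>

lemma (in group_action) image_one: "t \<subseteq> E \<Longrightarrow> \<phi> \<one> ` t = t"
  using id_eq_one by (metis image_cong image_ident restrict_apply' subsetD)

lemma (in group_action) image_mult:
  "t \<subseteq> E \<Longrightarrow> g \<in> carrier G \<Longrightarrow> h \<in> carrier G \<Longrightarrow> \<phi> (g \<otimes> h) ` t = \<phi> g ` \<phi> h ` t"
  using composition_rule by (auto simp: image_iff subset_iff)

lemma (in group_action) image_inv_image:
  assumes "t \<subseteq> E" "g \<in> carrier G"
  shows "\<phi> (inv g) ` \<phi> g ` t = t"
proof -
  have "\<phi> (inv g) (\<phi> g x) = x" if "x \<in> t" for x
    using orbit_sym_aux assms that by blast
  then show ?thesis by (simp add: image_image)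
qed

lemma (in group_action) image_image_inv:
  assumes "t \<subseteq> E" "g \<in> carrier G"
  shows "\<phi> g ` \<phi> (inv g) ` t = t"
proof -
  interpret group G using group_hom group_hom.axioms(1) by auto
  show ?thesis using image_inv_image[OF assms(1) inv_closed[OF assms(2)]] assms(2) by simp
qed

lemma (in group_action) card_image_action: "t \<subseteq> E \<Longrightarrow> g \<in> carrier G \<Longrightarrow> card (\<phi> g ` t) = card t"
  using inj_prop by (meson card_image inj_on_subset)

lemma (in group_action) image_subset_action: "t \<subseteq> E \<Longrightarrow> g \<in> carrier G \<Longrightarrow> \<phi> g ` t \<subseteq> E"
  using element_image by blast

locale simplicial_group_action =
  fixes G (structure) and \<phi> :: "'g \<Rightarrow> 'v \<Rightarrow> 'v" and X :: "'v set set"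
  assumes complex: "simplicial_complex X" and simplicial: "simplicial_action G \<phi> X"
begin

sublocale group_action G "vertices X" \<phi>
  using simplicial by (simp add: simplicial_action_def)

sublocale group G
  using group_hom group_hom.axioms(1) by auto

abbreviation simplex_orbit :: "'v set \<Rightarrow> 'v set set" where
  "simplex_orbit \<sigma> \<equiv> orbit G (\<lambda>g. (`) (\<phi> g)) \<sigma>"

definition invariant :: "'v set set \<Rightarrow> bool" where
  "invariant S \<longleftrightarrow> (\<forall>g\<in>carrier G. \<forall>\<sigma>\<in>S. \<phi> g ` \<sigma> \<in> S)"

lemma simplex_subset_vertices: "\<sigma> \<in> X \<Longrightarrow> \<sigma> \<subseteq> vertices X"
  by (auto simp: vertices_def)

lemma image_simplex: "g \<in> carrier G \<Longrightarrow> \<sigma> \<in> X \<Longrightarrow> \<phi> g ` \<sigma> \<in> X"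
  using simplicial by (simp add: simplicial_action_def)

lemma invariant_complex: "invariant X"
  by (simp add: invariant_def image_simplex)

lemma G_cs_iff: "G_cs G \<phi> X Z \<longleftrightarrow> subcomplex Z X \<and> invariant Z \<and> finite (simplex_orbit ` Z)"
  by (simp add: G_cs_def invariant_def orbit_def Setcompr_eq_image)

lemma mem_simplex_orbit_self: "\<sigma> \<subseteq> vertices X \<Longrightarrow> \<sigma> \<in> simplex_orbit \<sigma>"
proof -
  assume "\<sigma> \<subseteq> vertices X"
  then have "\<sigma> = \<phi> \<one> ` \<sigma>" by (simp add: image_one)
  then show ?thesis unfolding orbit_def using one_closed by blast
qed

lemma simplex_orbit_image:
  assumes \<sigma>: "\<sigma> \<subseteq> vertices X" and g: "g \<in> carrier G"
  shows "simplex_orbit (\<phi> g ` \<sigma>) = simplex_orbit \<sigma>"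
proof
  show "simplex_orbit (\<phi> g ` \<sigma>) \<subseteq> simplex_orbit \<sigma>"
  proof
    fix \<tau> assume "\<tau> \<in> simplex_orbit (\<phi> g ` \<sigma>)"
    then obtain h where h: "h \<in> carrier G" "\<tau> = \<phi> h ` \<phi> g ` \<sigma>" by (auto simp: orbit_def)
    then have "\<tau> = \<phi> (h \<otimes> g) ` \<sigma>" using image_mult[OF \<sigma> h(1) g] by simp
    then show "\<tau> \<in> simplex_orbit \<sigma>" using h(1) g unfolding orbit_def by blast
  qed
  show "simplex_orbit \<sigma> \<subseteq> simplex_orbit (\<phi> g ` \<sigma>)"
  proof
    fix \<tau> assume "\<tau> \<in> simplex_orbit \<sigma>"
    then obtain h where h: "h \<in> carrier G" "\<tau> = \<phi> h ` \<sigma>" by (auto simp: orbit_def)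
    then have "\<tau> = \<phi> (h \<otimes> inv g) ` \<phi> g ` \<sigma>"
      using image_mult[OF image_subset_action[OF \<sigma> g] h(1) inv_closed[OF g]] image_inv_image[OF \<sigma> g]
      by simp
    then show "\<tau> \<in> simplex_orbit (\<phi> g ` \<sigma>)" using h(1) g unfolding orbit_def by blast
  qed
qed

lemma invariant_image_mem_iff:
  assumes Z: "invariant Z" and \<sigma>: "\<sigma> \<subseteq> vertices X" and g: "g \<in> carrier G"
  shows "\<phi> g ` \<sigma> \<in> Z \<longleftrightarrow> \<sigma> \<in> Z"
proof
  assume "\<phi> g ` \<sigma> \<in> Z"
  then have "\<phi> (inv g) ` \<phi> g ` \<sigma> \<in> Z" using Z inv_closed[OF g] by (simp add: invariant_def)
  then show "\<sigma> \<in> Z" using image_inv_image[OF \<sigma> g] by simp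
qed (use Z g in \<open>simp add: invariant_def\<close>)

lemma invariant_triangles_outside: "invariant Z \<Longrightarrow> invariant (triangles_outside Z X)"
  unfolding invariant_def[of "triangles_outside Z X"]
proof (intro ballI)
  fix g t assume Z: "invariant Z" and g: "g \<in> carrier G" and "t \<in> triangles_outside Z X"
  then have t: "t \<in> X" "card t = 3" "t \<notin> Z" by (auto simp: triangles_outside_def)
  have "t \<subseteq> vertices X" using t(1) by (rule simplex_subset_vertices)
  then show "\<phi> g ` t \<in> triangles_outside Z X"
    using t image_simplex[OF g] card_image_action[OF _ g] invariant_image_mem_iff[OF Z _ g]
    by (simp add: triangles_outside_def)
qed

lemma invariant_Union_orbits:
  assumes "D \<subseteq> X"
  shows "invariant (\<Union>(simplex_orbit ` D))"
  unfolding invariant_def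
proof (intro ballI)
  fix g \<sigma> assume g: "g \<in> carrier G" and "\<sigma> \<in> \<Union>(simplex_orbit ` D)"
  then obtain d h where d: "d \<in> D" "h \<in> carrier G" "\<sigma> = \<phi> h ` d" by (auto simp: orbit_def)
  have d_vertices: "d \<subseteq> vertices X" using d(1) assms simplex_subset_vertices by blast
  have "\<phi> g ` \<sigma> \<in> simplex_orbit \<sigma>" using g unfolding orbit_def by blast
  also have "simplex_orbit \<sigma> = simplex_orbit d"
    using simplex_orbit_image[OF d_vertices d(2)] d(3) by simp
  finally show "\<phi> g ` \<sigma> \<in> \<Union>(simplex_orbit ` D)" using d(1) by blast
qed

lemma subset_Union_orbits: "D \<subseteq> X \<Longrightarrow> D \<subseteq> \<Union>(simplex_orbit ` D)"
  using mem_simplex_orbit_self simplex_subset_vertices by blast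

lemma Union_orbits_subset: "invariant S \<Longrightarrow> D \<subseteq> S \<Longrightarrow> \<Union>(simplex_orbit ` D) \<subseteq> S"
  by (auto simp: invariant_def orbit_def)

lemma finite_orbits_faces:
  assumes D: "finite D" "D \<subseteq> X"
  shows "finite (simplex_orbit ` faces (\<Union>(simplex_orbit ` D)))"
proof -
  have "simplex_orbit ` faces (\<Union>(simplex_orbit ` D)) \<subseteq> simplex_orbit ` (\<Union>d\<in>D. Pow d)"
  proof
    fix B assume "B \<in> simplex_orbit ` faces (\<Union>(simplex_orbit ` D))"
    then obtain \<sigma> d h where \<sigma>: "B = simplex_orbit \<sigma>" "\<sigma> \<subseteq> \<phi> h ` d" and d: "d \<in> D" "h \<in> carrier G"
      by (auto simp: faces_def orbit_def)
    have d_vertices: "d \<subseteq> vertices X" using d(1) D(2) simplex_subset_vertices by blast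
    then have \<sigma>_vertices: "\<sigma> \<subseteq> vertices X" using \<sigma>(2) image_subset_action[OF _ d(2)] by blast
    define \<sigma>0 where "\<sigma>0 = \<phi> (inv h) ` \<sigma>"
    have "\<sigma>0 \<subseteq> d" using \<sigma>(2) image_inv_image[OF d_vertices d(2)] unfolding \<sigma>0_def by blast
    moreover have "\<sigma> = \<phi> h ` \<sigma>0" using image_image_inv[OF \<sigma>_vertices d(2)] by (simp add: \<sigma>0_def)
    ultimately have "B = simplex_orbit \<sigma>0"
      using \<sigma>(1) simplex_orbit_image[OF _ d(2), of \<sigma>0] d_vertices by auto
    then show "B \<in> simplex_orbit ` (\<Union>d\<in>D. Pow d)" using \<open>\<sigma>0 \<subseteq> d\<close> d(1) by blast
  qed
  moreover have "finite (\<Union>d\<in>D. Pow d)"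
    using D complex by (auto simp: simplicial_complex_def)
  ultimately show ?thesis by (meson finite_imageI finite_subset)
qed

lemma G_cs_Un_faces:
  assumes Z: "G_cs G \<phi> X Z" and D: "finite D" "D \<subseteq> X"
  shows "G_cs G \<phi> X (Z \<union> faces (\<Union>(simplex_orbit ` D)))"
proof -
  let ?S = "\<Union>(simplex_orbit ` D)"
  have Z_sub: "Z \<subseteq> X" "simplicial_complex Z" and Z_inv: "invariant Z"
    and Z_fin: "finite (simplex_orbit ` Z)"
    using Z by (simp_all add: G_cs_iff subcomplex_def)
  have S_X: "?S \<subseteq> X" using Union_orbits_subset[OF invariant_complex D(2)] .
  have "invariant (Z \<union> faces ?S)"
    unfolding invariant_def
  proof (intro ballI)
    fix g \<sigma> assume g: "g \<in> carrier G" and "\<sigma> \<in> Z \<union> faces ?S"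
    then consider "\<sigma> \<in> Z" | t where "t \<in> ?S" "\<sigma> \<subseteq> t" "\<sigma> \<noteq> {}" by (auto simp: faces_def)
    then show "\<phi> g ` \<sigma> \<in> Z \<union> faces ?S"
    proof cases
      case 1
      then show ?thesis using Z_inv g by (simp add: invariant_def)
    next
      case 2
      then have "\<phi> g ` t \<in> ?S"
        using invariant_Union_orbits[OF D(2)] g unfolding invariant_def by blast
      moreover have "\<phi> g ` \<sigma> \<subseteq> \<phi> g ` t" "\<phi> g ` \<sigma> \<noteq> {}" using 2 by auto
      ultimately show ?thesis unfolding faces_def by blast
    qed
  qed
  then show ?thesis
    using Z_sub Z_fin faces_subset[OF complex S_X]
      simplicial_complex_Un_faces[OF Z_sub(2) complex S_X]
      finite_orbits_faces[OF D]
    by (simp add: G_cs_iff subcomplex_def image_Un)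
qed

lemma has_free_edge_image:
  assumes Z: "invariant Z" and S: "invariant S" "S \<subseteq> X"
    and t: "t \<in> S" "has_free_edge Z S t" and g: "g \<in> carrier G"
  shows "has_free_edge Z S (\<phi> g ` t)"
proof -
  obtain e where e: "card e = 2" "e \<subseteq> t" "e \<notin> Z" and e_free: "\<forall>t'\<in>S. e \<subseteq> t' \<longrightarrow> t' = t"
    using t(2) by (auto simp: has_free_edge_def)
  have e_vertices: "e \<subseteq> vertices X" using e(2) S(2) t(1) simplex_subset_vertices by blast
  have "t' = \<phi> g ` t" if "t' \<in> S" "\<phi> g ` e \<subseteq> t'" for t'
  proof -
    have t'_vertices: "t' \<subseteq> vertices X" using that(1) S(2) simplex_subset_vertices by blast
    have "\<phi> (inv g) ` t' \<in> S" using S(1) that(1) inv_closed[OF g] by (simp add: invariant_def)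
    moreover have "e \<subseteq> \<phi> (inv g) ` t'"
      using image_mono[OF that(2), of "\<phi> (inv g)"] image_inv_image[OF e_vertices g] by simp
    ultimately have "\<phi> (inv g) ` t' = t" using e_free by blast
    then show ?thesis using image_image_inv[OF t'_vertices g] by auto
  qed
  moreover have "card (\<phi> g ` e) = 2" "\<phi> g ` e \<notin> Z"
    using e card_image_action[OF e_vertices g] invariant_image_mem_iff[OF Z e_vertices g]
    by simp_all
  ultimately show ?thesis using e(2) unfolding has_free_edge_def by blast
qed

lemma edge_equiv_collapse_orbit:
  assumes Z: "G_cs G \<phi> X Z" and D: "finite D" "D \<subseteq> triangles_outside Z X"
    and t: "t \<in> \<Union>(simplex_orbit ` D)" "has_free_edge Z (\<Union>(simplex_orbit ` D)) t"
    and p: "edge_path Z p" and q: "edge_path Z q" and pq: "edge_equiv (extend_by Z X D) p q"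
  shows "edge_equiv (extend_by Z X (D - simplex_orbit t)) p q"
proof -
  let ?S = "\<Union>(simplex_orbit ` D)"
  have Z_sub: "subcomplex Z X" and Z_inv: "invariant Z" using Z by (simp_all add: G_cs_iff)
  have D_X: "D \<subseteq> X" using D(2) by (auto simp: triangles_outside_def)
  have S_X: "?S \<subseteq> X" using Union_orbits_subset[OF invariant_complex D_X] .
  have D_S: "D \<subseteq> ?S" using D_X by (rule subset_Union_orbits)
  have "has_free_edge Z D \<tau>" if \<tau>: "\<tau> \<in> D \<inter> simplex_orbit t" for \<tau>
  proof -
    obtain g where "g \<in> carrier G" "\<tau> = \<phi> g ` t" using \<tau> unfolding orbit_def by blast
    then have "has_free_edge Z ?S \<tau>"
      using has_free_edge_image[OF Z_inv invariant_Union_orbits[OF D_X] S_X t] by simp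
    then show ?thesis using D_S by (rule has_free_edge_subset)
  qed
  then have "edge_equiv (extend_by Z X (D - D \<inter> simplex_orbit t)) p q"
    using edge_equiv_extend_by_collapse_all[OF complex Z_sub p q _ _ D(2) _ pq] D(1) by blast
  then show ?thesis by (simp add: Diff_Int)
qed

lemma card_orbits_Diff_orbit_less:
  assumes D: "finite D" "D \<subseteq> X" and t: "t \<in> \<Union>(simplex_orbit ` D)"
  shows "card (simplex_orbit ` (D - simplex_orbit t)) < card (simplex_orbit ` D)"
proof -
  obtain d h where d: "d \<in> D" "h \<in> carrier G" "t = \<phi> h ` d" using t by (auto simp: orbit_def)
  have same_orbit: "simplex_orbit t = simplex_orbit d"
    using simplex_orbit_image[OF _ d(2)] d D(2) simplex_subset_vertices by blast
  have "simplex_orbit ` (D - simplex_orbit t) \<subseteq> simplex_orbit ` D - {simplex_orbit t}"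
  proof
    fix B assume "B \<in> simplex_orbit ` (D - simplex_orbit t)"
    then obtain d' where d': "d' \<in> D" "d' \<notin> simplex_orbit t" "B = simplex_orbit d'" by blast
    moreover have "d' \<in> simplex_orbit d'"
      using d'(1) D(2) mem_simplex_orbit_self simplex_subset_vertices by blast
    ultimately show "B \<in> simplex_orbit ` D - {simplex_orbit t}" by auto
  qed
  then have "card (simplex_orbit ` (D - simplex_orbit t))
      \<le> card (simplex_orbit ` D - {simplex_orbit t})"
    using D(1) by (intro card_mono) simp_all
  also have "\<dots> < card (simplex_orbit ` D)"
    using D(1) same_orbit d(1) by (intro card_Diff1_less) simp_all
  finally show ?thesis .
qed

lemma minimal_filling:
  assumes Z: "G_cs G \<phi> X Z" and p: "edge_path Z p" and q: "edge_path Z q" and pq: "edge_equiv X p q"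
  obtains D where "finite D" "D \<subseteq> triangles_outside Z X" "edge_equiv (extend_by Z X D) p q"
    and "\<And>t. t \<in> \<Union>(simplex_orbit ` D) \<Longrightarrow> \<not> has_free_edge Z (\<Union>(simplex_orbit ` D)) t"
proof -
  let ?fills = "\<lambda>D. finite D \<and> D \<subseteq> triangles_outside Z X \<and> edge_equiv (extend_by Z X D) p q"
  have "subcomplex Z X" using Z by (simp add: G_cs_iff)
  then obtain D0 where "?fills D0" using extend_by_finite_support[OF _ pq] by blast
  then obtain D where D: "?fills D"
    and least: "\<And>D'. ?fills D' \<Longrightarrow> card (simplex_orbit ` D) \<le> card (simplex_orbit ` D')"
    using ex_has_least_nat[of ?fills D0 "\<lambda>D. card (simplex_orbit ` D)"] by blast
  have D_fin: "finite D" and D_sub: "D \<subseteq> triangles_outside Z X"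
    and D_fills: "edge_equiv (extend_by Z X D) p q" using D by simp_all
  have D_X: "D \<subseteq> X" using D_sub by (auto simp: triangles_outside_def)
  show thesis
  proof (rule that[OF D_fin D_sub D_fills notI])
    fix t assume t: "t \<in> \<Union>(simplex_orbit ` D)" and free: "has_free_edge Z (\<Union>(simplex_orbit ` D)) t"
    have "D - simplex_orbit t \<subseteq> triangles_outside Z X" using D_sub by blast
    moreover have "edge_equiv (extend_by Z X (D - simplex_orbit t)) p q"
      by (rule edge_equiv_collapse_orbit[OF Z D_fin D_sub t free p q D_fills])
    ultimately have "card (simplex_orbit ` D) \<le> card (simplex_orbit ` (D - simplex_orbit t))"
      using D_fin by (intro least) simp
    then show False using card_orbits_Diff_orbit_less[OF D_fin D_X t] by linarith
  qed
qed

end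

theorem corollary3p4:
  fixes G :: "('g, 'm) monoid_scheme" and \<phi> :: "'g \<Rightarrow> 'v \<Rightarrow> 'v"
    and X Z :: "'v set set"
  assumes "group G"
    and "simplicial_complex X"
    and "simplicial_action G \<phi> X"
    and "sc_connected X"
    and "G_cs G \<phi> X Z"
    and "sc_connected Z"
    and "essential Z"
    and "\<not> pi1_injective Z X"
  shows "\<exists>W. G_cs G \<phi> X W \<and> thick W \<and> Z \<subseteq> W"
proof -
  interpret simplicial_group_action G \<phi> X using assms(2,3) by unfold_locales
  have Z: "simplicial_complex Z" "invariant Z" using assms(5)
    by (simp_all add: G_cs_iff subcomplex_def)
  obtain p where p: "edge_path Z p" "hd p = last p" "edge_equiv X p [hd p]"
    and not_null: "\<not> edge_equiv Z p [hd p]"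
    using assms(8) unfolding pi1_injective_def by blast
  have hd_p: "{hd p} \<in> Z" using edge_path_hd_vertex[OF Z(1) p(1)] not_null by fastforce
  obtain D where D: "finite D" "D \<subseteq> triangles_outside Z X" "edge_equiv (extend_by Z X D) p [hd p]"
    and no_free: "\<And>t. t \<in> \<Union>(simplex_orbit ` D) \<Longrightarrow> \<not> has_free_edge Z (\<Union>(simplex_orbit ` D)) t"
    using minimal_filling[OF assms(5) p(1) _ p(3)] by (auto simp: edge_path_def)
  have "\<not> shares_no_edge (extend_by Z X D) Z"
    using edge_equiv_in_subcomplex[OF Z(1) assms(6) _ p(1) _ hd_p D(3)] p(2) hd_p not_null by auto
  then obtain t e where t: "t \<in> D" and e: "e \<in> Z" "card e = 2" "e \<subseteq> t"
    by (auto simp: shares_no_edge_def extend_by_def)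
  define S where "S = \<Union>(simplex_orbit ` D)"
  have D_X: "D \<subseteq> X" using D(2) by (auto simp: triangles_outside_def)
  have S: "D \<subseteq> S" "S \<subseteq> triangles_outside Z X"
    unfolding S_def using subset_Union_orbits[OF D_X] Union_orbits_subset[OF _ D(2)]
      invariant_triangles_outside[OF Z(2)] by simp_all
  have "essential (Z \<union> faces S)"
    using S no_free
    by (intro essential_Un_faces[OF assms(7)]) (auto simp: S_def triangles_outside_def)
  then have "thick (Z \<union> faces S)"
    using t S by (intro thick_Un_faces[OF _ assms(7) _ _ _ e]) (auto simp: triangles_outside_def)
  moreover have "G_cs G \<phi> X (Z \<union> faces S)" unfolding S_def
    by (rule G_cs_Un_faces[OF assms(5) D(1) D_X])
  ultimately show ?thesis by blast
qed

end
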